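(* There is $R_1\in(0,\frac12\sqrt{\frac{3}{8\pi}})$ such that for all $0<R<R_1$ and all $(m_1,\rho_1),(m_2,\rho_2)\in\mathcal{C}^0_R$, $$\|T[m_1,\rho_1]-T[m_2,\rho_2]\|\le\frac34\,\|(m_1-m_2,\rho_1-\rho_2)\|.$$
   Context: Let $\rho_*(R)=\frac{16\pi}{3}R^2$ and $\mathcal{C}^0_R=\{(m,\rho):[0,R]\to\mathbb{R}^2 \text{ continuous}:\ 0\le m(r)\le \frac{4\pi}{3}\rho_*(R)r^3,\ 0\le\rho(r)\le\rho_*(R)\}$, with norm $\|(m,\rho)\|=\frac{3}{4\pi}\|m/r^3\|_{L^\infty}+2\|\rho\|_{L^\infty}$. Define $T[m,\rho]=(M[\rho],P[m,\rho])$ with $M[\rho](r)=\int_0^r 4\pi s^2\rho(s)\,ds$ and $P[m,\rho](r)=\int_r^R \frac{1+2\rho(s)}{1-\frac{8\pi}{3}s^2-\frac{2m(s)}{s}}\,\frac{4\pi s}{3}\Big[1+3\rho(s)+\frac{3m(s)}{4\pi s^3}\Big]ds$. *)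

theory Defs
  imports "HOL-Analysis.Analysis"
begin

definition rho_star :: "real \<Rightarrow> real" where
  "rho_star R = 16 * pi / 3 * R^2"

definition C0 :: "real \<Rightarrow> ((real \<Rightarrow> real) \<times> (real \<Rightarrow> real)) set" where
  "C0 R = {(m, \<rho>). continuous_on {0..R} m \<and> continuous_on {0..R} \<rho> \<and>
     (\<forall>r\<in>{0..R}. 0 \<le> m r \<and> m r \<le> 4 * pi / 3 * rho_star R * r^3 \<and>
                 0 \<le> \<rho> r \<and> \<rho> r \<le> rho_star R)}"

definition supnorm :: "(real \<Rightarrow> real) \<Rightarrow> real set \<Rightarrow> real" where
  "supnorm f S = (SUP r\<in>S. \<bar>f r\<bar>)"

definition pnorm :: "real \<Rightarrow> (real \<Rightarrow> real) \<times> (real \<Rightarrow> real) \<Rightarrow> real" where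
  "pnorm R p = 3 / (4 * pi) * supnorm (\<lambda>r. fst p r / r^3) {0<..R} + 2 * supnorm (snd p) {0..R}"

definition Mop :: "(real \<Rightarrow> real) \<Rightarrow> real \<Rightarrow> real" where
  "Mop \<rho> r = integral {0..r} (\<lambda>s. 4 * pi * s^2 * \<rho> s)"

definition Pop :: "real \<Rightarrow> (real \<Rightarrow> real) \<Rightarrow> (real \<Rightarrow> real) \<Rightarrow> real \<Rightarrow> real" where
  "Pop R m \<rho> r = integral {r..R} (\<lambda>s.
      (1 + 2 * \<rho> s) / (1 - 8 * pi / 3 * s^2 - 2 * m s / s) *
      (4 * pi * s / 3) * (1 + 3 * \<rho> s + 3 * m s / (4 * pi * s^3)))"

definition Top :: "real \<Rightarrow> (real \<Rightarrow> real) \<times> (real \<Rightarrow> real) \<Rightarrow> (real \<Rightarrow> real) \<times> (real \<Rightarrow> real)" where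
  "Top R p = (Mop (snd p), Pop R (fst p) (snd p))"

end

theory Submission
  imports Defs
begin

text \<open>Both components of T are integrals, so it suffices to compare integrands pointwise.
  For M this gives at once |M[\<rho>1] - M[\<rho>2]|(r) \<le> 4\<pi>/3 r^3 \<parallel>\<rho>1 - \<rho>2\<parallel>, so the M-part of the
  norm of the difference is at most half of the \<rho>-part of the norm of the data.
  For P, writing the integrand in terms of the mean density y = m/s^3 exhibits it as 4\<pi>s/3 times
  a function of (s, \<rho>, y) whose denominator stays above 1/2 for small s; it is therefore
  Lipschitz in (\<rho>, y) with constant O(s), and integrating over [r, R] bounds the P-part by
  O(R^2) times the norm of the data. For R \<le> 1/100 this fits into the remaining room below 3/4.\<close>

lemma abs_mult3_diff_le:
  fixes c u1 u2 v1 v2 w1 w2 :: real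
  assumes "0 \<le> u1" "u1 \<le> c" "0 \<le> u2" "u2 \<le> c" "0 \<le> v1" "v1 \<le> c" "0 \<le> v2" "v2 \<le> c"
    "0 \<le> w1" "w1 \<le> c" "0 \<le> w2" "w2 \<le> c"
  shows "\<bar>u1 * v1 * w1 - u2 * v2 * w2\<bar> \<le> c\<^sup>2 * (\<bar>u1 - u2\<bar> + \<bar>v1 - v2\<bar> + \<bar>w1 - w2\<bar>)"
proof -
  have "\<bar>u1 * v1 * w1 - u2 * v2 * w2\<bar>
      = \<bar>(u1 - u2) * (v1 * w1) + (v1 - v2) * (u2 * w1) + (w1 - w2) * (u2 * v2)\<bar>"
    by (simp add: algebra_simps)
  also have "\<dots> \<le> \<bar>(u1 - u2) * (v1 * w1)\<bar> + \<bar>(v1 - v2) * (u2 * w1)\<bar> + \<bar>(w1 - w2) * (u2 * v2)\<bar>"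
    by (meson abs_triangle_ineq add_mono order_trans order_refl)
  also have "\<dots> \<le> \<bar>u1 - u2\<bar> * c\<^sup>2 + \<bar>v1 - v2\<bar> * c\<^sup>2 + \<bar>w1 - w2\<bar> * c\<^sup>2"
    using assms by (intro add_mono) (auto simp: abs_mult power2_eq_square intro!: mult_left_mono mult_mono)
  finally show ?thesis by (simp add: algebra_simps)
qed

lemma four_pi_third_le: "0 \<le> s \<Longrightarrow> 4 * pi * s / 3 \<le> 6 * (s::real)"
  using mult_right_mono[of pi 4 s] pi_less_4 by simp

lemma supnorm_le:
  assumes "S \<noteq> {}" "\<And>x. x \<in> S \<Longrightarrow> \<bar>f x\<bar> \<le> c"
  shows "supnorm f S \<le> c"
  unfolding supnorm_def using assms by (rule cSUP_least)

lemma abs_le_supnorm: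
  assumes "x \<in> S" "\<And>x. x \<in> S \<Longrightarrow> \<bar>f x\<bar> \<le> c"
  shows "\<bar>f x\<bar> \<le> supnorm f S"
  unfolding supnorm_def using assms by (intro cSUP_upper bdd_aboveI2) auto

lemma abs_integral_diff_le:
  fixes f g h :: "'a::euclidean_space \<Rightarrow> real"
  assumes "f integrable_on S" "g integrable_on S" "h integrable_on S"
    and "\<And>x. x \<in> S \<Longrightarrow> \<bar>f x - g x\<bar> \<le> h x"
  shows "\<bar>integral S f - integral S g\<bar> \<le> integral S h"
  using integral_norm_bound_integral[of "\<lambda>x. f x - g x" S h] assms
  by (simp add: integral_diff integrable_diff)

lemma has_integral_cmult_square:
  fixes c r :: real
  assumes "0 \<le> r"
  shows "((\<lambda>s. c * s^2) has_integral c * r^3 / 3) {0..r}"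
proof -
  have "((\<lambda>s. c * s^2) has_integral c * r^3 / 3 - c * 0^3 / 3) {0..r}"
  proof (rule fundamental_theorem_of_calculus)
    fix x :: real
    have "((\<lambda>s. c * s^3 / 3) has_real_derivative c * x^2) (at x within {0..r})"
      by (auto intro!: derivative_eq_intros simp: power2_eq_square)
    then show "((\<lambda>s. c * s^3 / 3) has_vector_derivative c * x^2) (at x within {0..r})"
      by (simp add: has_real_derivative_iff_has_vector_derivative)
  qed (use assms in simp)
  then show ?thesis by simp
qed

definition P_integrand :: "real \<Rightarrow> real \<Rightarrow> real \<Rightarrow> real" where
  "P_integrand s x m = (1 + 2 * x) / (1 - 8 * pi / 3 * s^2 - 2 * m / s) *
     (4 * pi * s / 3) * (1 + 3 * x + 3 * m / (4 * pi * s^3))"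

definition P_factor :: "real \<Rightarrow> real \<Rightarrow> real \<Rightarrow> real" where
  "P_factor s x y = (1 + 2 * x) * (1 / (1 - 8 * pi / 3 * s^2 - 2 * y * s^2)) * (1 + 3 * x + 3 / (4 * pi) * y)"

lemma P_integrand_eq_P_factor:
  assumes "0 < s"
  shows "P_integrand s x m = 4 * pi * s / 3 * P_factor s x (m / s^3)"
proof -
  have "2 * m / s = 2 * (m / s^3) * s^2" "3 * m / (4 * pi * s^3) = 3 / (4 * pi) * (m / s^3)"
    using assms by (simp_all add: field_simps power2_eq_square power3_eq_cube)
  then show ?thesis
    unfolding P_integrand_def P_factor_def by simp
qed

lemma P_integrand_at_0 [simp]: "P_integrand 0 x m = 0"
  by (simp add: P_integrand_def)

lemma P_denominator_bounds:
  fixes s y :: real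
  assumes "\<bar>s\<bar> \<le> 1/10" "0 \<le> y" "y \<le> 1/10"
  shows "1/2 \<le> 1 - 8 * pi / 3 * s^2 - 2 * y * s^2" "1 - 8 * pi / 3 * s^2 - 2 * y * s^2 \<le> 1"
proof -
  have s2: "s^2 \<le> 1/100"
    using power_mono[OF assms(1), of 2] by (simp add: power2_eq_square)
  have "8 * pi / 3 * s^2 \<le> 8 * 4 / 3 * (1/100)"
    using pi_less_4 s2 by (intro mult_mono) auto
  moreover have "2 * y * s^2 \<le> 2 * (1/10) * (1/100)"
    using assms s2 by (intro mult_mono) auto
  moreover have "0 \<le> 8 * pi / 3 * s^2" "0 \<le> 2 * y * s^2"
    using assms by simp_all
  ultimately show "1/2 \<le> 1 - 8 * pi / 3 * s^2 - 2 * y * s^2" "1 - 8 * pi / 3 * s^2 - 2 * y * s^2 \<le> 1"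
    by linarith+
qed

lemma P_factor_bounds:
  assumes "\<bar>s\<bar> \<le> 1/10" "0 \<le> x" "x \<le> 1/10" "0 \<le> y" "y \<le> 1/10"
  shows "0 \<le> 1 + 2 * x" "1 + 2 * x \<le> 2"
    "0 \<le> 1 / (1 - 8 * pi / 3 * s^2 - 2 * y * s^2)" "1 / (1 - 8 * pi / 3 * s^2 - 2 * y * s^2) \<le> 2"
    "0 \<le> 1 + 3 * x + 3 / (4 * pi) * y" "1 + 3 * x + 3 / (4 * pi) * y \<le> 2"
proof -
  have "3 / (4 * pi) * y \<le> y"
    using pi_gt3 assms by (intro mult_left_le_one_le) (auto simp: field_simps)
  then show "0 \<le> 1 + 2 * x" "1 + 2 * x \<le> 2"
    "0 \<le> 1 + 3 * x + 3 / (4 * pi) * y" "1 + 3 * x + 3 / (4 * pi) * y \<le> 2"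
    using assms by auto
  show "0 \<le> 1 / (1 - 8 * pi / 3 * s^2 - 2 * y * s^2)" "1 / (1 - 8 * pi / 3 * s^2 - 2 * y * s^2) \<le> 2"
    using P_denominator_bounds[OF assms(1,4,5)] by (auto simp: field_simps)
qed

lemma abs_P_factor_le:
  assumes "\<bar>s\<bar> \<le> 1/10" "0 \<le> x" "x \<le> 1/10" "0 \<le> y" "y \<le> 1/10"
  shows "\<bar>P_factor s x y\<bar> \<le> 8"
proof -
  note b = P_factor_bounds[OF assms]
  have "(1 + 2 * x) * (1 / (1 - 8 * pi / 3 * s^2 - 2 * y * s^2)) \<le> 2 * 2"
    using b by (intro mult_mono) auto
  then have "P_factor s x y \<le> (2 * 2) * 2"
    unfolding P_factor_def using b by (intro mult_mono) auto
  moreover have "0 \<le> P_factor s x y"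
    unfolding P_factor_def using b by simp
  ultimately show ?thesis by simp
qed

lemma inverse_denominator_lipschitz:
  assumes s: "\<bar>s\<bar> \<le> 1/10" and y: "0 \<le> y1" "y1 \<le> 1/10" "0 \<le> y2" "y2 \<le> 1/10"
  shows "\<bar>1 / (1 - 8 * pi / 3 * s^2 - 2 * y1 * s^2) - 1 / (1 - 8 * pi / 3 * s^2 - 2 * y2 * s^2)\<bar>
    \<le> \<bar>y1 - y2\<bar>"
proof -
  define D1 where "D1 = 1 - 8 * pi / 3 * s^2 - 2 * y1 * s^2"
  define D2 where "D2 = 1 - 8 * pi / 3 * s^2 - 2 * y2 * s^2"
  have D: "1/2 \<le> D1" "1/2 \<le> D2"
    using P_denominator_bounds(1)[OF s y(1,2)] P_denominator_bounds(1)[OF s y(3,4)]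
    unfolding D1_def D2_def by auto
  have s2: "8 * s^2 \<le> 1"
    using power_mono[OF s, of 2] by (simp add: power2_eq_square)
  have "1 / D1 - 1 / D2 = (D2 - D1) / (D1 * D2)"
    using D by (simp add: field_simps)
  also have "D2 - D1 = 2 * s^2 * (y1 - y2)"
    by (simp add: D1_def D2_def algebra_simps)
  finally have "\<bar>1 / D1 - 1 / D2\<bar> = 2 * s^2 * \<bar>y1 - y2\<bar> / (D1 * D2)"
    using D by (simp add: abs_mult abs_divide)
  also have "\<dots> \<le> 2 * s^2 * \<bar>y1 - y2\<bar> / (1/4)"
    using D mult_mono[OF D] by (intro divide_left_mono) auto
  also have "\<dots> \<le> \<bar>y1 - y2\<bar>"
    using s2 mult_right_mono[OF s2 abs_ge_zero[of "y1 - y2"]] by simp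
  finally show ?thesis
    unfolding D1_def D2_def .
qed

lemma P_factor_lipschitz:
  assumes s: "\<bar>s\<bar> \<le> 1/10"
    and x: "0 \<le> x1" "x1 \<le> 1/10" "0 \<le> x2" "x2 \<le> 1/10"
    and y: "0 \<le> y1" "y1 \<le> 1/10" "0 \<le> y2" "y2 \<le> 1/10"
  shows "\<bar>P_factor s x1 y1 - P_factor s x2 y2\<bar> \<le> 20 * (\<bar>x1 - x2\<bar> + \<bar>y1 - y2\<bar>)"
proof -
  define D1 where "D1 = 1 - 8 * pi / 3 * s^2 - 2 * y1 * s^2"
  define D2 where "D2 = 1 - 8 * pi / 3 * s^2 - 2 * y2 * s^2"
  have inv: "\<bar>1 / D1 - 1 / D2\<bar> \<le> \<bar>y1 - y2\<bar>"
    unfolding D1_def D2_def by (rule inverse_denominator_lipschitz[OF s y])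
  have "\<bar>3 / (4 * pi) * y1 - 3 / (4 * pi) * y2\<bar> = 3 / (4 * pi) * \<bar>y1 - y2\<bar>"
    unfolding right_diff_distrib[symmetric] abs_mult by simp
  also have "\<dots> \<le> \<bar>y1 - y2\<bar>"
    using pi_gt3 by (intro mult_left_le_one_le) auto
  finally have lin: "\<bar>(1 + 3 * x1 + 3 / (4 * pi) * y1) - (1 + 3 * x2 + 3 / (4 * pi) * y2)\<bar>
      \<le> 3 * \<bar>x1 - x2\<bar> + \<bar>y1 - y2\<bar>"
    by (simp add: abs_le_iff abs_if split: if_splits)
  have "\<bar>P_factor s x1 y1 - P_factor s x2 y2\<bar>
      \<le> 2\<^sup>2 * (\<bar>(1 + 2 * x1) - (1 + 2 * x2)\<bar> + \<bar>1 / D1 - 1 / D2\<bar>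
          + \<bar>(1 + 3 * x1 + 3 / (4 * pi) * y1) - (1 + 3 * x2 + 3 / (4 * pi) * y2)\<bar>)"
    unfolding P_factor_def D1_def D2_def
    using P_factor_bounds[OF s x(1,2) y(1,2)] P_factor_bounds[OF s x(3,4) y(3,4)]
    by (intro abs_mult3_diff_le) auto
  also have "\<bar>(1 + 2 * x1) - (1 + 2 * x2)\<bar> = 2 * \<bar>x1 - x2\<bar>"
    using abs_mult[of 2 "x1 - x2"] by (simp add: right_diff_distrib)
  also have "2\<^sup>2 * (2 * \<bar>x1 - x2\<bar> + \<bar>1 / D1 - 1 / D2\<bar>
          + \<bar>(1 + 3 * x1 + 3 / (4 * pi) * y1) - (1 + 3 * x2 + 3 / (4 * pi) * y2)\<bar>)
      \<le> 2\<^sup>2 * (2 * \<bar>x1 - x2\<bar> + \<bar>y1 - y2\<bar> + (3 * \<bar>x1 - x2\<bar> + \<bar>y1 - y2\<bar>))"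
    using inv lin by (intro mult_left_mono add_mono) auto
  also have "\<dots> \<le> 20 * (\<bar>x1 - x2\<bar> + \<bar>y1 - y2\<bar>)"
    by (simp add: algebra_simps)
  finally show ?thesis .
qed

lemma P_integrand_lipschitz:
  assumes s: "0 < s" "s \<le> 1/10"
    and x: "0 \<le> x1" "x1 \<le> 1/10" "0 \<le> x2" "x2 \<le> 1/10"
    and m: "0 \<le> m1" "m1 \<le> s^3/10" "0 \<le> m2" "m2 \<le> s^3/10"
  shows "\<bar>P_integrand s x1 m1 - P_integrand s x2 m2\<bar> \<le> 120 * s * (\<bar>x1 - x2\<bar> + \<bar>m1 / s^3 - m2 / s^3\<bar>)"
proof -
  have y: "0 \<le> m1 / s^3" "m1 / s^3 \<le> 1/10" "0 \<le> m2 / s^3" "m2 / s^3 \<le> 1/10"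
    using s m by (auto simp: field_simps)
  have "P_integrand s x1 m1 - P_integrand s x2 m2
      = 4 * pi * s / 3 * (P_factor s x1 (m1 / s^3) - P_factor s x2 (m2 / s^3))"
    using s by (simp add: P_integrand_eq_P_factor right_diff_distrib)
  then have "\<bar>P_integrand s x1 m1 - P_integrand s x2 m2\<bar>
      = 4 * pi * s / 3 * \<bar>P_factor s x1 (m1 / s^3) - P_factor s x2 (m2 / s^3)\<bar>"
    using s by (subst \<open>?this\<close>) (simp add: abs_mult)
  also have "\<dots> \<le> (6 * s) * (20 * (\<bar>x1 - x2\<bar> + \<bar>m1 / s^3 - m2 / s^3\<bar>))"
    using s four_pi_third_le[of s] P_factor_lipschitz[of s, OF _ x y] by (intro mult_mono) auto
  finally show ?thesis by (simp add: algebra_simps)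
qed

lemma abs_P_integrand_le:
  assumes s: "0 \<le> s" "s \<le> 1/10" and x: "0 \<le> x" "x \<le> 1/10" and m: "0 \<le> m" "m \<le> s^3/10"
  shows "\<bar>P_integrand s x m\<bar> \<le> 48 * s"
proof (cases "s = 0")
  case False
  then have "0 < s" using s by simp
  have y: "0 \<le> m / s^3" "m / s^3 \<le> 1/10"
    using \<open>0 < s\<close> m by (auto simp: field_simps)
  have "\<bar>P_integrand s x m\<bar> = 4 * pi * s / 3 * \<bar>P_factor s x (m / s^3)\<bar>"
    using \<open>0 < s\<close> by (simp add: P_integrand_eq_P_factor abs_mult)
  also have "\<dots> \<le> (6 * s) * 8"
    using s four_pi_third_le[of s] abs_P_factor_le[of s, OF _ x y] by (intro mult_mono) auto
  finally show ?thesis by simp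
qed simp

definition small_profile :: "real \<Rightarrow> (real \<Rightarrow> real) \<Rightarrow> (real \<Rightarrow> real) \<Rightarrow> bool" where
  "small_profile R m \<rho> \<longleftrightarrow> continuous_on {0..R} m \<and> continuous_on {0..R} \<rho> \<and>
     (\<forall>s\<in>{0..R}. 0 \<le> \<rho> s \<and> \<rho> s \<le> 1/10 \<and> 0 \<le> m s \<and> m s \<le> s^3/10)"

lemma C0_small_profile:
  assumes "0 \<le> R" "R \<le> 1/100" and "(m, \<rho>) \<in> C0 R"
  shows "small_profile R m \<rho>"
proof -
  have "R^2 \<le> (1/100)^2"
    using assms by (intro power_mono) auto
  then have "rho_star R \<le> 16 * 4 / 3 * (1/100)^2"
    unfolding rho_star_def using pi_less_4 by (intro mult_mono) auto
  moreover have "4 * pi / 3 * rho_star R \<le> 4 * 4 / 3 * (16 * 4 / 3 * (1/100)^2)"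
    using calculation pi_less_4 by (intro mult_mono) (auto simp: rho_star_def)
  ultimately have "rho_star R \<le> 1/10" "4 * pi / 3 * rho_star R \<le> 1/10"
    by (simp_all add: power2_eq_square)
  then have "4 * pi / 3 * rho_star R * s^3 \<le> s^3 / 10" if "0 \<le> s" for s
    using mult_right_mono[of "4 * pi / 3 * rho_star R" "1/10" "s^3"] that by simp
  with \<open>rho_star R \<le> 1/10\<close> assms(3) show ?thesis
    unfolding small_profile_def C0_def by fastforce
qed

lemma continuous_on_P_integrand:
  assumes R: "R \<le> 1/10" and small: "small_profile R m \<rho>"
  shows "continuous_on {0..R} (\<lambda>s. P_integrand s (\<rho> s) (m s))"
  unfolding continuous_on_eq_continuous_within
proof
  fix x assume x: "x \<in> {0..R}"
  have b: "0 \<le> \<rho> s" "\<rho> s \<le> 1/10" "0 \<le> m s" "m s \<le> s^3/10" if "s \<in> {0..R}" for s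
    using small that unfolding small_profile_def by auto
  show "continuous (at x within {0..R}) (\<lambda>s. P_integrand s (\<rho> s) (m s))"
  proof (cases "x = 0")
    case False
    then have "0 < x" using x by auto
    have sub: "{x/2..R} \<subseteq> {0..R}" using \<open>0 < x\<close> by auto
    have "1/2 \<le> 1 - 8 * pi / 3 * s^2 - 2 * (m s / s^3) * s^2" if "s \<in> {x/2..R}" for s
      using that sub \<open>0 < x\<close> R b[of s] by (intro P_denominator_bounds) (auto simp: field_simps)
    then have "continuous_on {x/2..R} (\<lambda>s. 4 * pi * s / 3 * P_factor s (\<rho> s) (m s / s^3))"
      using small \<open>0 < x\<close> unfolding P_factor_def small_profile_def
      by (intro continuous_intros continuous_on_subset[OF _ sub]) force+
    then have "continuous_on {x/2..R} (\<lambda>s. P_integrand s (\<rho> s) (m s))"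
      by (rule continuous_on_eq) (use \<open>0 < x\<close> in \<open>simp add: P_integrand_eq_P_factor\<close>)
    then have "continuous (at x within {x/2..R}) (\<lambda>s. P_integrand s (\<rho> s) (m s))"
      using x \<open>0 < x\<close> by (simp add: continuous_on_eq_continuous_within)
    moreover have "at x within {0..R} = at x within {x/2..R}"
      using x \<open>0 < x\<close> by (intro at_within_nhd[of x "{x/2<..<R+1}"]) auto
    ultimately show ?thesis by (simp add: continuous_within)
  next
    case True
    \<comment> \<open>At s = 0 the integrand is 0 by the convention x / 0 = 0, which is also its limit.\<close>
    have "((\<lambda>s. P_integrand s (\<rho> s) (m s)) \<longlongrightarrow> 0) (at 0 within {0..R})"
    proof (rule Lim_null_comparison)
      show "\<forall>\<^sub>F s in at 0 within {0..R}. norm (P_integrand s (\<rho> s) (m s)) \<le> 48 * s"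
        unfolding eventually_at_filter using R b
        by (intro always_eventually allI impI) (auto intro!: abs_P_integrand_le)
      show "((\<lambda>s. 48 * s) \<longlongrightarrow> 0) (at 0 within {0..R})"
        by (intro tendsto_eq_intros) auto
    qed
    then show ?thesis
      using True by (simp add: continuous_within)
  qed
qed

lemma abs_Mop_diff_le:
  assumes "continuous_on {0..R} \<rho>1" "continuous_on {0..R} \<rho>2" "r \<in> {0..R}"
    and "\<And>s. s \<in> {0..R} \<Longrightarrow> \<bar>\<rho>1 s - \<rho>2 s\<bar> \<le> B"
  shows "\<bar>Mop \<rho>1 r - Mop \<rho>2 r\<bar> \<le> 4 * pi / 3 * B * r^3"
proof -
  have sub: "{0..r} \<subseteq> {0..R}" using assms(3) by auto
  have "\<bar>Mop \<rho>1 r - Mop \<rho>2 r\<bar> \<le> integral {0..r} (\<lambda>s. (4 * pi * B) * s^2)"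
    unfolding Mop_def
  proof (rule abs_integral_diff_le)
    show "(\<lambda>s. 4 * pi * s^2 * \<rho>1 s) integrable_on {0..r}"
      by (intro integrable_continuous_interval continuous_intros continuous_on_subset[OF assms(1) sub])
    show "(\<lambda>s. 4 * pi * s^2 * \<rho>2 s) integrable_on {0..r}"
      by (intro integrable_continuous_interval continuous_intros continuous_on_subset[OF assms(2) sub])
    show "(\<lambda>s. (4 * pi * B) * s^2) integrable_on {0..r}"
      by (intro integrable_continuous_interval continuous_intros)
    fix s assume "s \<in> {0..r}"
    then have "\<bar>\<rho>1 s - \<rho>2 s\<bar> \<le> B"
      using assms(4) sub by auto
    then have "(4 * pi * s^2) * \<bar>\<rho>1 s - \<rho>2 s\<bar> \<le> (4 * pi * s^2) * B"
      by (rule mult_left_mono) simp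
    moreover have "\<bar>4 * pi * s^2 * \<rho>1 s - 4 * pi * s^2 * \<rho>2 s\<bar> = (4 * pi * s^2) * \<bar>\<rho>1 s - \<rho>2 s\<bar>"
      by (subst right_diff_distrib[symmetric]) (simp add: abs_mult)
    ultimately show "\<bar>4 * pi * s^2 * \<rho>1 s - 4 * pi * s^2 * \<rho>2 s\<bar> \<le> (4 * pi * B) * s^2"
      by (simp add: mult_ac)
  qed
  also have "\<dots> = 4 * pi / 3 * B * r^3"
    using integral_unique[OF has_integral_cmult_square[of r "4 * pi * B"]] assms(3) by simp
  finally show ?thesis .
qed

lemma Pop_eq_integral_P_integrand:
  "Pop R m \<rho> r = integral {r..R} (\<lambda>s. P_integrand s (\<rho> s) (m s))"
  unfolding Pop_def P_integrand_def ..

lemma abs_Pop_diff_le: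
  assumes R: "R \<le> 1/10" and small: "small_profile R m1 \<rho>1" "small_profile R m2 \<rho>2"
    and r: "r \<in> {0..R}" and AB: "0 \<le> A" "0 \<le> B"
    and "\<And>s. s \<in> {0<..R} \<Longrightarrow> \<bar>m1 s / s^3 - m2 s / s^3\<bar> \<le> A"
    and "\<And>s. s \<in> {0..R} \<Longrightarrow> \<bar>\<rho>1 s - \<rho>2 s\<bar> \<le> B"
  shows "\<bar>Pop R m1 \<rho>1 r - Pop R m2 \<rho>2 r\<bar> \<le> 120 * R^2 * (A + B)"
proof -
  have sub: "{r..R} \<subseteq> {0..R}" using r by auto
  have "\<bar>Pop R m1 \<rho>1 r - Pop R m2 \<rho>2 r\<bar> \<le> integral {r..R} (\<lambda>s. 120 * R * (A + B))"
    unfolding Pop_eq_integral_P_integrand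
  proof (rule abs_integral_diff_le)
    show "(\<lambda>s. P_integrand s (\<rho>1 s) (m1 s)) integrable_on {r..R}"
      by (intro integrable_continuous_interval continuous_on_subset[OF continuous_on_P_integrand[OF R small(1)] sub])
    show "(\<lambda>s. P_integrand s (\<rho>2 s) (m2 s)) integrable_on {r..R}"
      by (intro integrable_continuous_interval continuous_on_subset[OF continuous_on_P_integrand[OF R small(2)] sub])
    show "(\<lambda>s. 120 * R * (A + B)) integrable_on {r..R}"
      by (rule integrable_const_ivl)
    fix s assume s: "s \<in> {r..R}"
    show "\<bar>P_integrand s (\<rho>1 s) (m1 s) - P_integrand s (\<rho>2 s) (m2 s)\<bar> \<le> 120 * R * (A + B)"
    proof (cases "s = 0")
      case False
      then have "0 < s" using s r by auto
      have "\<bar>P_integrand s (\<rho>1 s) (m1 s) - P_integrand s (\<rho>2 s) (m2 s)\<bar>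
          \<le> 120 * s * (\<bar>\<rho>1 s - \<rho>2 s\<bar> + \<bar>m1 s / s^3 - m2 s / s^3\<bar>)"
        using small s sub \<open>0 < s\<close> R unfolding small_profile_def
        by (intro P_integrand_lipschitz) auto
      also have "\<dots> \<le> 120 * R * (B + A)"
        using assms(7,8) s sub \<open>0 < s\<close> by (intro mult_mono add_mono) auto
      finally show ?thesis by (simp add: add.commute)
    qed (use AB r in simp)
  qed
  also have "\<dots> = (R - r) * (120 * R * (A + B))"
    using r by (simp add: algebra_simps)
  also have "\<dots> \<le> R * (120 * R * (A + B))"
    using r AB by (intro mult_right_mono) auto
  finally show ?thesis by (simp add: power2_eq_square algebra_simps)
qed

lemma small_profile_diff_le_supnorm:
  assumes "small_profile R m1 \<rho>1" "small_profile R m2 \<rho>2"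
  shows "r \<in> {0<..R} \<Longrightarrow> \<bar>(m1 r - m2 r) / r^3\<bar> \<le> supnorm (\<lambda>r. (m1 r - m2 r) / r^3) {0<..R}"
    and "r \<in> {0..R} \<Longrightarrow> \<bar>\<rho>1 r - \<rho>2 r\<bar> \<le> supnorm (\<lambda>r. \<rho>1 r - \<rho>2 r) {0..R}"
proof -
  have bounds: "0 \<le> \<rho>1 s" "\<rho>1 s \<le> 1/10" "0 \<le> m1 s" "m1 s \<le> s^3/10"
    "0 \<le> \<rho>2 s" "\<rho>2 s \<le> 1/10" "0 \<le> m2 s" "m2 s \<le> s^3/10" if "s \<in> {0..R}" for s
    using assms that unfolding small_profile_def by auto
  show "\<bar>(m1 r - m2 r) / r^3\<bar> \<le> supnorm (\<lambda>r. (m1 r - m2 r) / r^3) {0<..R}" if "r \<in> {0<..R}"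
  proof (rule abs_le_supnorm[OF that, where c = 1])
    fix s assume "s \<in> {0<..R}"
    then have "\<bar>m1 s - m2 s\<bar> \<le> s^3" "0 < s^3"
      using bounds[of s] by auto
    then show "\<bar>(m1 s - m2 s) / s^3\<bar> \<le> 1"
      by (simp add: abs_divide)
  qed
  show "\<bar>\<rho>1 r - \<rho>2 r\<bar> \<le> supnorm (\<lambda>r. \<rho>1 r - \<rho>2 r) {0..R}" if "r \<in> {0..R}"
    using bounds by (intro abs_le_supnorm[OF that, where c = 1]) fastforce
qed

lemma Top_contraction:
  assumes R: "0 < R" "R \<le> 1/100" and C: "(m1, \<rho>1) \<in> C0 R" "(m2, \<rho>2) \<in> C0 R"
  shows "pnorm R (\<lambda>r. fst (Top R (m1, \<rho>1)) r - fst (Top R (m2, \<rho>2)) r,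
                  \<lambda>r. snd (Top R (m1, \<rho>1)) r - snd (Top R (m2, \<rho>2)) r)
         \<le> 3/4 * pnorm R (\<lambda>r. m1 r - m2 r, \<lambda>r. \<rho>1 r - \<rho>2 r)" (is "?L \<le> 3/4 * ?R")
proof -
  have small: "small_profile R m1 \<rho>1" "small_profile R m2 \<rho>2"
    using R C by (auto intro: C0_small_profile)
  define A where "A = supnorm (\<lambda>r. (m1 r - m2 r) / r^3) {0<..R}"
  define B where "B = supnorm (\<lambda>r. \<rho>1 r - \<rho>2 r) {0..R}"
  have A: "\<bar>m1 r / r^3 - m2 r / r^3\<bar> \<le> A" if "r \<in> {0<..R}" for r
    using small_profile_diff_le_supnorm(1)[OF small that] by (simp add: A_def diff_divide_distrib)
  have B: "\<bar>\<rho>1 r - \<rho>2 r\<bar> \<le> B" if "r \<in> {0..R}" for r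
    using small_profile_diff_le_supnorm(2)[OF small that] by (simp add: B_def)
  have AB: "0 \<le> A" "0 \<le> B"
    using A[of R] B[of R] R by (auto intro: order_trans[OF abs_ge_zero])
  have "supnorm (\<lambda>r. (Mop \<rho>1 r - Mop \<rho>2 r) / r^3) {0<..R} \<le> 4 * pi / 3 * B"
    using R small abs_Mop_diff_le[of R \<rho>1 \<rho>2 _ B] B unfolding small_profile_def
    by (intro supnorm_le) (auto simp: abs_divide divide_le_eq)
  then have M: "3 / (4 * pi) * supnorm (\<lambda>r. (Mop \<rho>1 r - Mop \<rho>2 r) / r^3) {0<..R} \<le> B"
    by (simp add: field_simps)
  have "supnorm (\<lambda>r. Pop R m1 \<rho>1 r - Pop R m2 \<rho>2 r) {0..R} \<le> 120 * R^2 * (A + B)"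
    using R small AB A B by (intro supnorm_le abs_Pop_diff_le) auto
  also have "\<dots> \<le> 120 * (1/100)^2 * (A + B)"
    using R AB by (intro mult_right_mono mult_left_mono power_mono) auto
  finally have P: "2 * supnorm (\<lambda>r. Pop R m1 \<rho>1 r - Pop R m2 \<rho>2 r) {0..R} \<le> 1/25 * A + 1/25 * B"
    using AB by (simp add: power2_eq_square)
  have "1/25 * A \<le> 9 / (16 * pi) * A"
    using AB pi_less_4 by (intro mult_right_mono) (auto simp: field_simps)
  moreover have "3/4 * (3 / (4 * pi) * A + 2 * B) = 9 / (16 * pi) * A + 3/2 * B"
    by (simp add: field_simps)
  ultimately have bound: "B + (1/25 * A + 1/25 * B) \<le> 3/4 * (3 / (4 * pi) * A + 2 * B)"
    using AB by linarith
  have "?L = 3 / (4 * pi) * supnorm (\<lambda>r. (Mop \<rho>1 r - Mop \<rho>2 r) / r^3) {0<..R}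
      + 2 * supnorm (\<lambda>r. Pop R m1 \<rho>1 r - Pop R m2 \<rho>2 r) {0..R}"
    unfolding pnorm_def Top_def by simp
  also have "\<dots> \<le> B + (1/25 * A + 1/25 * B)"
    using M P by (rule add_mono)
  also note bound
  also have "3 / (4 * pi) * A + 2 * B = ?R"
    unfolding pnorm_def A_def B_def by simp
  finally show ?thesis .
qed

theorem mainTheorem3:
  shows "\<exists>R1. 0 < R1 \<and> R1 < 1/2 * sqrt (3 / (8 * pi)) \<and>
    (\<forall>R. 0 < R \<and> R < R1 \<longrightarrow>
      (\<forall>m1 \<rho>1 m2 \<rho>2. (m1, \<rho>1) \<in> C0 R \<longrightarrow> (m2, \<rho>2) \<in> C0 R \<longrightarrow>
         pnorm R (\<lambda>r. fst (Top R (m1, \<rho>1)) r - fst (Top R (m2, \<rho>2)) r,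
                  \<lambda>r. snd (Top R (m1, \<rho>1)) r - snd (Top R (m2, \<rho>2)) r)
         \<le> 3/4 * pnorm R (\<lambda>r. m1 r - m2 r, \<lambda>r. \<rho>1 r - \<rho>2 r)))"
proof (intro exI[of _ "1/100"] conjI allI impI)
  show "(0::real) < 1/100" by simp
  have "(1/50)^2 < 3 / (8 * pi)"
    using pi_less_4 by (simp add: field_simps)
  then show "1/100 < 1/2 * sqrt (3 / (8 * pi))"
    using real_less_rsqrt by fastforce
qed (rule Top_contraction; auto)

end
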